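(* There is a constant $C$ such that for every two NFAs $A$ and $B$, each with at most $n$ states and over a common alphabet of $m$ input letters, there exist two DFAs $A'$ and $B'$ with at most $C n^2$ states and over an alphabet of at most $C(m+n)$ letters such that, for every $r\ge 1$, there is a tower of height $r$ between $L(A)$ and $L(B)$ if and only if there is a tower of height $r$ between $L(A')$ and $L(B')$. In particular, there is an infinite tower between $L(A)$ and $L(B)$ if and only if there is an infinite tower between $L(A')$ and $L(B')$.
   Context: For strings $v=a_1\cdots a_k$ and $w$, $v\preccurlyeq w$ if $w\in\Sigma^*a_1\Sigma^*a_2\Sigma^*\cdots\Sigma^*a_k\Sigma^*$. A sequence $(w_i)_{i=1}^r$ of strings is a tower between languages $K$ and $L$ if $w_1\in K\cup L$ and for all $i=1,\dots,r-1$: $w_i\preccurlyeq w_{i+1}$, $w_i\in K$ implies $w_{i+1}\in L$, and $w_i\in L$ implies $w_{i+1}\in K$; $r$ is its height. An infinite tower is an infinite sequence with the same properties. *)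

theory Defs
  imports Main "HOL-Library.Sublist"
begin

record ('q, 'a) nfa =
  nfa_states :: "'q set"
  nfa_alph   :: "'a set"
  nfa_delta  :: "'q \<Rightarrow> 'a \<Rightarrow> 'q set"
  nfa_init   :: "'q set"
  nfa_final  :: "'q set"

definition nfa_wf :: "('q, 'a) nfa \<Rightarrow> bool" where
  "nfa_wf A \<longleftrightarrow> finite (nfa_states A) \<and> nfa_states A \<noteq> {} \<and> finite (nfa_alph A)
     \<and> nfa_init A \<subseteq> nfa_states A \<and> nfa_final A \<subseteq> nfa_states A
     \<and> (\<forall>q \<in> nfa_states A. \<forall>a \<in> nfa_alph A. nfa_delta A q a \<subseteq> nfa_states A)"

fun nfa_steps :: "('q, 'a) nfa \<Rightarrow> 'q set \<Rightarrow> 'a list \<Rightarrow> 'q set" where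
  "nfa_steps A S [] = S"
| "nfa_steps A S (a # w) = nfa_steps A (\<Union>q \<in> S. nfa_delta A q a) w"

definition nfa_lang :: "('q, 'a) nfa \<Rightarrow> 'a list set" where
  "nfa_lang A = {w \<in> lists (nfa_alph A). nfa_steps A (nfa_init A) w \<inter> nfa_final A \<noteq> {}}"

record ('q, 'a) dfa =
  dfa_states :: "'q set"
  dfa_alph   :: "'a set"
  dfa_delta  :: "'q \<Rightarrow> 'a \<Rightarrow> 'q"
  dfa_init   :: "'q"
  dfa_final  :: "'q set"

definition dfa_wf :: "('q, 'a) dfa \<Rightarrow> bool" where
  "dfa_wf A \<longleftrightarrow> finite (dfa_states A) \<and> finite (dfa_alph A)
     \<and> dfa_init A \<in> dfa_states A \<and> dfa_final A \<subseteq> dfa_states A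
     \<and> (\<forall>q \<in> dfa_states A. \<forall>a \<in> dfa_alph A. dfa_delta A q a \<in> dfa_states A)"

fun dfa_steps :: "('q, 'a) dfa \<Rightarrow> 'q \<Rightarrow> 'a list \<Rightarrow> 'q" where
  "dfa_steps A q [] = q"
| "dfa_steps A q (a # w) = dfa_steps A (dfa_delta A q a) w"

definition dfa_lang :: "('q, 'a) dfa \<Rightarrow> 'a list set" where
  "dfa_lang A = {w \<in> lists (dfa_alph A). dfa_steps A (dfa_init A) w \<in> dfa_final A}"

text \<open>Towers. The subsequence (scattered subword) order is the library's subseq.
  A finite tower w_1,...,w_r is a list of length r (its height).\<close>
definition is_tower :: "'a list set \<Rightarrow> 'a list set \<Rightarrow> 'a list list \<Rightarrow> bool" where
  "is_tower K L ws \<longleftrightarrow> ws \<noteq> [] \<and> ws ! 0 \<in> K \<union> L \<and>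
     (\<forall>i. Suc i < length ws \<longrightarrow>
        subseq (ws ! i) (ws ! Suc i) \<and>
        (ws ! i \<in> K \<longrightarrow> ws ! Suc i \<in> L) \<and>
        (ws ! i \<in> L \<longrightarrow> ws ! Suc i \<in> K))"

definition is_inf_tower :: "'a list set \<Rightarrow> 'a list set \<Rightarrow> (nat \<Rightarrow> 'a list) \<Rightarrow> bool" where
  "is_inf_tower K L f \<longleftrightarrow> f 0 \<in> K \<union> L \<and>
     (\<forall>i. subseq (f i) (f (Suc i)) \<and>
        (f i \<in> K \<longrightarrow> f (Suc i) \<in> L) \<and>
        (f i \<in> L \<longrightarrow> f (Suc i) \<in> K))"

end

theory Submission
  imports Defs "HOL-Library.Countable"
begin

text \<open>Interleave the input word with markers naming the states of a run: before each letter,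
  a marker \<open>q\<^sub>A\<close> for a state of \<open>A\<close> and a marker \<open>q\<^sub>B\<close> for a state of \<open>B\<close>.
  The DFA \<open>A'\<close> ignores the markers of \<open>B\<close>, remembers the last marker of \<open>A\<close>, and on a letter
  checks that this guessed state is a successor of the previous one; it only needs a pair of
  states, hence \<open>O(n\<^sup>2)\<close> states. Erasing the markers is monotone for the subword order and maps
  \<open>L(A')\<close> into \<open>L(A)\<close> and \<open>L(B')\<close> into \<open>L(B)\<close>. Conversely, if \<open>w \<in> L(A) \<union> L(B)\<close> lies above the
  erasure of \<open>u\<close>, one can insert into \<open>u\<close> the missing letters and, in front of every letter,
  the markers of accepting runs of \<open>A\<close> and of \<open>B\<close> on \<open>w\<close> (whichever exist), obtaining a word
  above \<open>u\<close> in exactly the languages that \<open>w\<close> belongs to. So towers lift step by step, and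
  project back provided \<open>L(A) \<inter> L(B) = {}\<close>; otherwise both sides have towers of every
  height, built from a common word.\<close>

subsection \<open>Towers under a projection\<close>

definition tower_step :: "'a list set \<Rightarrow> 'a list set \<Rightarrow> 'a list \<Rightarrow> 'a list \<Rightarrow> bool" where
  "tower_step K L u v \<longleftrightarrow> subseq u v \<and> (u \<in> K \<longrightarrow> v \<in> L) \<and> (u \<in> L \<longrightarrow> v \<in> K)"

lemma is_tower_iff_steps:
  "is_tower K L ws \<longleftrightarrow>
     ws \<noteq> [] \<and> ws ! 0 \<in> K \<union> L \<and> (\<forall>i. Suc i < length ws \<longrightarrow> tower_step K L (ws ! i) (ws ! Suc i))"
  by (simp add: is_tower_def tower_step_def)

lemma is_inf_tower_iff_steps:
  "is_inf_tower K L f \<longleftrightarrow> f 0 \<in> K \<union> L \<and> (\<forall>i. tower_step K L (f i) (f (Suc i)))"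
  by (simp add: is_inf_tower_def tower_step_def)

lemma tower_step_mem: "tower_step K L u v \<Longrightarrow> u \<in> K \<union> L \<Longrightarrow> v \<in> K \<union> L"
  by (auto simp: tower_step_def)

lemma tower_nth_mem: "is_tower K L ws \<Longrightarrow> i < length ws \<Longrightarrow> ws ! i \<in> K \<union> L"
proof (induction i)
  case (Suc i)
  then show ?case using tower_step_mem by (fastforce simp: is_tower_iff_steps)
qed (simp add: is_tower_def)

lemma inf_tower_mem: "is_inf_tower K L f \<Longrightarrow> f i \<in> K \<union> L"
proof (induction i)
  case (Suc i)
  then show ?case using tower_step_mem by (fastforce simp: is_inf_tower_iff_steps)
qed (simp add: is_inf_tower_def)

lemma is_tower_replicate: "x \<in> K \<inter> L \<Longrightarrow> is_tower K L (replicate (Suc r) x)"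
  by (auto simp: is_tower_def nth_Cons split: nat.split)

lemma is_inf_tower_const: "x \<in> K \<inter> L \<Longrightarrow> is_inf_tower K L (\<lambda>_. x)"
  by (simp add: is_inf_tower_def)

locale tower_projection =
  fixes h :: "'a list \<Rightarrow> 'b list" and U :: "'a list set"
    and K L :: "'b list set" and K' L' :: "'a list set"
  assumes project_K: "u \<in> K' \<Longrightarrow> h u \<in> K"
    and project_L: "u \<in> L' \<Longrightarrow> h u \<in> L"
    and subseq_project: "subseq u v \<Longrightarrow> subseq (h u) (h v)"
    and Nil_in_U: "[] \<in> U" and project_Nil: "h [] = []"
    and lift: "u \<in> U \<Longrightarrow> w \<in> K \<union> L \<Longrightarrow> subseq (h u) w \<Longrightarrow>
      \<exists>u' \<in> U. subseq u u' \<and> h u' = w \<and> (w \<in> K \<longrightarrow> u' \<in> K') \<and> (w \<in> L \<longrightarrow> u' \<in> L')"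
begin

definition lifts :: "'a list \<Rightarrow> 'b list \<Rightarrow> bool" where
  "lifts u w \<longleftrightarrow> h u = w \<and> (w \<in> K \<longrightarrow> u \<in> K') \<and> (w \<in> L \<longrightarrow> u \<in> L')"

lemma lift_chain:
  assumes "\<And>i. f i \<in> K \<union> L" and "\<And>i. subseq (f i) (f (Suc i))"
  shows "\<exists>g. \<forall>i. lifts (g i) (f i) \<and> subseq (g i) (g (Suc i))"
proof -
  have "\<exists>g. \<forall>i. (g i \<in> U \<and> lifts (g i) (f i)) \<and> subseq (g i) (g (Suc i))"
  proof (rule dependent_nat_choice)
    show "\<exists>u. u \<in> U \<and> lifts u (f 0)"
      using lift[OF Nil_in_U assms(1)[of 0]] by (auto simp: project_Nil lifts_def)
  next
    fix u i assume "u \<in> U \<and> lifts u (f i)"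
    then have "u \<in> U" "subseq (h u) (f (Suc i))" using assms(2)[of i] by (auto simp: lifts_def)
    then show "\<exists>u'. (u' \<in> U \<and> lifts u' (f (Suc i))) \<and> subseq u u'"
      using lift assms(1) unfolding lifts_def by blast
  qed
  then show ?thesis by blast
qed

lemma lifts_mem: "lifts u w \<Longrightarrow> w \<in> K \<union> L \<Longrightarrow> u \<in> K' \<union> L'"
  by (auto simp: lifts_def)

lemma tower_step_lift:
  assumes "tower_step K L w w'" "lifts u w" "lifts u' w'" "subseq u u'"
  shows "tower_step K' L' u u'"
  using assms project_K[of u] project_L[of u] by (auto simp: tower_step_def lifts_def)

lemma tower_step_project:
  assumes "K \<inter> L = {}" "u \<in> K' \<union> L'" "tower_step K' L' u v"
  shows "tower_step K L (h u) (h v)"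
  using assms project_K[of u] project_L[of u] project_K[of v] project_L[of v] subseq_project
  by (auto simp: tower_step_def)

lemma tower_of_height_iff:
  "(\<exists>ws. is_tower K L ws \<and> length ws = r) \<longleftrightarrow> (\<exists>ws. is_tower K' L' ws \<and> length ws = r)"
proof
  assume "\<exists>ws. is_tower K L ws \<and> length ws = r"
  then obtain ws where ws: "is_tower K L ws" "length ws = r" by blast
  then have "r > 0" by (auto simp: is_tower_def)
  \<comment> \<open>pad the tower with copies of its last word to an infinite chain and lift that\<close>
  define f where "f i = ws ! min i (r - 1)" for i
  have f_nth: "i < r \<Longrightarrow> f i = ws ! i" for i by (simp add: f_def)
  have "f i \<in> K \<union> L" for i
    using tower_nth_mem[OF ws(1)] \<open>r > 0\<close> ws(2) by (simp add: f_def)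
  moreover have "subseq (f i) (f (Suc i))" for i
    using ws \<open>r > 0\<close> by (cases "Suc i < r") (auto simp: f_def is_tower_def)
  ultimately obtain g where g: "\<And>i. lifts (g i) (f i)" "\<And>i. subseq (g i) (g (Suc i))"
    using lift_chain by blast
  have "is_tower K' L' (map g [0..<r])"
    unfolding is_tower_iff_steps
  proof (intro conjI allI impI)
    show "map g [0..<r] ! 0 \<in> K' \<union> L'"
      using lifts_mem[OF g(1) \<open>f 0 \<in> K \<union> L\<close>] \<open>r > 0\<close> by simp
    fix i assume "Suc i < length (map g [0..<r])"
    then have "Suc i < r" by simp
    then have "tower_step K L (f i) (f (Suc i))" using ws f_nth by (simp add: is_tower_iff_steps)
    then show "tower_step K' L' (map g [0..<r] ! i) (map g [0..<r] ! Suc i)"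
      using tower_step_lift[OF _ g(1) g(1) g(2)] \<open>Suc i < r\<close> by (simp del: upt_Suc)
  qed (use \<open>r > 0\<close> in simp)
  then show "\<exists>ws. is_tower K' L' ws \<and> length ws = r" by force
next
  assume "\<exists>ws. is_tower K' L' ws \<and> length ws = r"
  then obtain us where us: "is_tower K' L' us" "length us = r" by blast
  then obtain r' where r': "r = Suc r'" by (cases r) (auto simp: is_tower_def)
  show "\<exists>ws. is_tower K L ws \<and> length ws = r"
  proof (cases "K \<inter> L = {}")
    case True
    have "is_tower K L (map h us)"
      using us tower_nth_mem[OF us(1)] tower_step_project[OF True] project_K project_L
      by (auto simp: is_tower_iff_steps)
    then show ?thesis using us(2) by force
  next
    case False
    then show ?thesis using is_tower_replicate r' by force
  qed
qed

lemma inf_tower_iff: "(\<exists>f. is_inf_tower K L f) \<longleftrightarrow> (\<exists>f. is_inf_tower K' L' f)"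
proof
  assume "\<exists>f. is_inf_tower K L f"
  then obtain f where f: "is_inf_tower K L f" by blast
  then have mem: "f i \<in> K \<union> L" for i by (rule inf_tower_mem)
  moreover have "subseq (f i) (f (Suc i))" for i
    using f by (simp add: is_inf_tower_def)
  ultimately obtain g where g: "\<And>i. lifts (g i) (f i)" "\<And>i. subseq (g i) (g (Suc i))"
    using lift_chain by blast
  have "tower_step K' L' (g i) (g (Suc i))" for i
    using tower_step_lift[OF _ g(1) g(1) g(2)] f by (simp add: is_inf_tower_iff_steps)
  then have "is_inf_tower K' L' g"
    using lifts_mem[OF g(1) mem] by (simp add: is_inf_tower_iff_steps)
  then show "\<exists>g. is_inf_tower K' L' g" by blast
next
  assume "\<exists>g. is_inf_tower K' L' g"
  then obtain g where g: "is_inf_tower K' L' g" by blast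
  then have mem: "g i \<in> K' \<union> L'" for i by (rule inf_tower_mem)
  show "\<exists>f. is_inf_tower K L f"
  proof (cases "K \<inter> L = {}")
    case True
    have "h (g 0) \<in> K \<union> L" using mem[of 0] project_K project_L by blast
    then have "is_inf_tower K L (h \<circ> g)"
      using g mem tower_step_project[OF True] by (simp add: is_inf_tower_iff_steps)
    then show ?thesis by blast
  next
    case False
    then show ?thesis using is_inf_tower_const by blast
  qed
qed

end

subsection \<open>The marker automaton\<close>

text \<open>The letter \<open>a\<close> is encoded as \<open>3a\<close>, a marker for the state \<open>q\<close> of \<open>A\<close> as \<open>3q + 1\<close> and
  one for the state \<open>q\<close> of \<open>B\<close> as \<open>3q + 2\<close>; the automaton for \<open>A\<close> is built with \<open>k = 1\<close>, the
  one for \<open>B\<close> with \<open>k = 2\<close>.\<close>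

definition marker_alph :: "(nat, nat) nfa \<Rightarrow> (nat, nat) nfa \<Rightarrow> nat set" where
  "marker_alph A B =
     (\<lambda>a. 3 * a) ` nfa_alph A \<union> (\<lambda>q. 3 * q + 1) ` nfa_states A \<union> (\<lambda>q. 3 * q + 2) ` nfa_states B"

definition unmark :: "nat list \<Rightarrow> nat list" where
  "unmark u = map (\<lambda>x. x div 3) (filter (\<lambda>x. x mod 3 = 0) u)"

lemma unmark_simps [simp]:
  "unmark [] = []"
  "unmark (x # u) = (if x mod 3 = 0 then x div 3 # unmark u else unmark u)"
  "unmark (u @ v) = unmark u @ unmark v"
  by (simp_all add: unmark_def)

lemma unmark_map_times_3 [simp]: "unmark (map (\<lambda>a. 3 * a) w) = w"
  by (induction w) auto

lemma subseq_unmark: "subseq u v \<Longrightarrow> subseq (unmark u) (unmark v)"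
  unfolding unmark_def by (intro subseq_map subseq_filter)

lemma mod_3_markers [simp]:
  "Suc (3 * x) mod 3 = 1" "Suc (3 * x) div 3 = x"
  "Suc (Suc (3 * x)) mod 3 = 2" "Suc (Suc (3 * x)) div 3 = x"
  "\<not> 3 dvd Suc (3 * x)" "\<not> 3 dvd Suc (Suc (3 * x))"
  by presburger+

lemma marker_alph_decode:
  "\<forall>x \<in> marker_alph A B. x mod 3 = 0 \<longrightarrow> x div 3 \<in> nfa_alph A"
  "\<forall>x \<in> marker_alph A B. x mod 3 = 1 \<longrightarrow> x div 3 \<in> nfa_states A"
  "\<forall>x \<in> marker_alph A B. x mod 3 = 2 \<longrightarrow> x div 3 \<in> nfa_states B"
  by (auto simp: marker_alph_def)

lemma card_marker_alph:
  assumes "nfa_wf A" "nfa_wf B"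
  shows "card (marker_alph A B) \<le> card (nfa_alph A) + card (nfa_states A) + card (nfa_states B)"
proof -
  have fin: "finite (nfa_alph A)" "finite (nfa_states A)" "finite (nfa_states B)"
    using assms by (auto simp: nfa_wf_def)
  have "card (marker_alph A B) \<le> card ((\<lambda>a. 3 * a) ` nfa_alph A) + card ((\<lambda>q. 3 * q + 1) ` nfa_states A)
      + card ((\<lambda>q. 3 * q + 2) ` nfa_states B)"
    unfolding marker_alph_def by (rule order_trans[OF card_Un_le add_right_mono[OF card_Un_le]])
  also have "\<dots> \<le> card (nfa_alph A) + card (nfa_states A) + card (nfa_states B)"
    by (intro add_mono card_image_le fin)
  finally show ?thesis .
qed

text \<open>\<open>Cur p\<close>: the letters read so far lead to the state \<open>p\<close> (\<open>None\<close>: no letter read yet,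
  standing for all initial states); \<open>Pend p q\<close>: in addition \<open>q\<close> is the last guess read.\<close>

datatype marker_state = Dead | Cur "nat option" | Pend "nat option" nat

instance marker_state :: countable by countable_datatype

fun current :: "marker_state \<Rightarrow> nat option" where
  "current Dead = None"
| "current (Cur p) = p"
| "current (Pend p q) = p"

definition state_set :: "(nat, nat) nfa \<Rightarrow> nat option \<Rightarrow> nat set" where
  "state_set N p = (case p of None \<Rightarrow> nfa_init N | Some q \<Rightarrow> {q})"

definition succs :: "(nat, nat) nfa \<Rightarrow> nat option \<Rightarrow> nat \<Rightarrow> nat set" where
  "succs N p a = (\<Union>q \<in> state_set N p. nfa_delta N q a)"

definition marker_step :: "(nat, nat) nfa \<Rightarrow> nat \<Rightarrow> marker_state \<Rightarrow> nat \<Rightarrow> marker_state" where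
  "marker_step N k s x = (case s of
      Dead \<Rightarrow> Dead
    | Cur p \<Rightarrow>
        if x mod 3 = 0 then Dead else if x mod 3 = k then Pend p (x div 3) else Cur p
    | Pend p q \<Rightarrow>
        if x mod 3 = 0 then (if q \<in> succs N p (x div 3) then Cur (Some q) else Dead)
        else if x mod 3 = k then Pend p (x div 3) else Pend p q)"

fun marker_steps :: "(nat, nat) nfa \<Rightarrow> nat \<Rightarrow> marker_state \<Rightarrow> nat list \<Rightarrow> marker_state" where
  "marker_steps N k s [] = s"
| "marker_steps N k s (x # w) = marker_steps N k (marker_step N k s x) w"

definition marker_states :: "(nat, nat) nfa \<Rightarrow> marker_state set" where
  "marker_states N = {Dead, Cur None} \<union> (\<lambda>q. Cur (Some q)) ` nfa_states N
     \<union> (\<lambda>(p, q). Pend p q) ` (insert None (Some ` nfa_states N) \<times> nfa_states N)"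

definition marker_final :: "(nat, nat) nfa \<Rightarrow> marker_state set" where
  "marker_final N = {s \<in> marker_states N. s \<noteq> Dead \<and> state_set N (current s) \<inter> nfa_final N \<noteq> {}}"

definition marker_dfa :: "(nat, nat) nfa \<Rightarrow> nat \<Rightarrow> nat set \<Rightarrow> (nat, nat) dfa" where
  "marker_dfa N k S =
     \<lparr>dfa_states = to_nat ` marker_states N, dfa_alph = S,
      dfa_delta = (\<lambda>q x. to_nat (marker_step N k (from_nat q) x)),
      dfa_init = to_nat (Cur None), dfa_final = to_nat ` marker_final N\<rparr>"

lemma dfa_steps_marker_dfa:
  "dfa_steps (marker_dfa N k S) (to_nat s) w = to_nat (marker_steps N k s w)"
  by (induction w arbitrary: s) (simp_all add: marker_dfa_def)

lemma marker_dfa_lang_iff: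
  "w \<in> dfa_lang (marker_dfa N k S) \<longleftrightarrow> w \<in> lists S \<and> marker_steps N k (Cur None) w \<in> marker_final N"
  using dfa_steps_marker_dfa[of N k S "Cur None" w]
  by (simp add: dfa_lang_def marker_dfa_def inj_image_mem_iff)

lemma marker_step_closed:
  assumes "s \<in> marker_states N" "x \<in> S" "\<forall>x \<in> S. x mod 3 = k \<longrightarrow> x div 3 \<in> nfa_states N"
  shows "marker_step N k s x \<in> marker_states N"
  using assms unfolding marker_states_def marker_step_def by (auto split: marker_state.splits)

lemma marker_steps_closed:
  assumes "s \<in> marker_states N" "w \<in> lists S" "\<forall>x \<in> S. x mod 3 = k \<longrightarrow> x div 3 \<in> nfa_states N"
  shows "marker_steps N k s w \<in> marker_states N"
  using assms by (induction w arbitrary: s) (auto intro: marker_step_closed)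

lemma marker_dfa_wf:
  assumes "nfa_wf N" "finite S" "\<forall>x \<in> S. x mod 3 = k \<longrightarrow> x div 3 \<in> nfa_states N"
  shows "dfa_wf (marker_dfa N k S)"
proof -
  have "finite (marker_states N)" using assms(1) by (auto simp: marker_states_def nfa_wf_def)
  moreover have "Cur None \<in> marker_states N" by (simp add: marker_states_def)
  moreover have "marker_final N \<subseteq> marker_states N" by (auto simp: marker_final_def)
  ultimately show ?thesis
    using assms marker_step_closed[where S = S and k = k] unfolding dfa_wf_def marker_dfa_def by auto
qed

lemma card_marker_states:
  assumes "finite (nfa_states N)"
  shows "card (marker_states N) \<le> 2 + card (nfa_states N) + Suc (card (nfa_states N)) * card (nfa_states N)"
proof -
  let ?Q = "nfa_states N"
  have "card (marker_states N) \<le> card {Dead, Cur None} + card ((\<lambda>q. Cur (Some q)) ` ?Q)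
      + card ((\<lambda>(p, q). Pend p q) ` (insert None (Some ` ?Q) \<times> ?Q))"
    unfolding marker_states_def by (rule order_trans[OF card_Un_le add_right_mono[OF card_Un_le]])
  also have "card {Dead, Cur None} \<le> 2" by (simp add: card_insert_le_m1)
  also have "card ((\<lambda>q. Cur (Some q)) ` ?Q) \<le> card ?Q" by (rule card_image_le[OF assms])
  also have "card ((\<lambda>(p, q). Pend p q) ` (insert None (Some ` ?Q) \<times> ?Q))
      \<le> card (insert None (Some ` ?Q)) * card ?Q"
    using assms card_image_le[of "insert None (Some ` ?Q) \<times> ?Q"] by (simp add: card_cartesian_product)
  also have "card (insert None (Some ` ?Q)) \<le> Suc (card ?Q)"
    using assms by (simp add: card_insert_if card_image)
  finally show ?thesis by simp
qed

lemma card_marker_dfa_states: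
  assumes "nfa_wf N" "card (nfa_states N) \<le> n"
  shows "card (dfa_states (marker_dfa N k S)) \<le> 5 * n\<^sup>2"
proof -
  have fin: "finite (nfa_states N)" and "nfa_states N \<noteq> {}" using assms(1) by (auto simp: nfa_wf_def)
  then have "1 \<le> n" using assms(2) card_gt_0_iff[of "nfa_states N"] by linarith
  have "finite (marker_states N)" using fin by (simp add: marker_states_def)
  then have "card (dfa_states (marker_dfa N k S)) \<le> card (marker_states N)"
    unfolding marker_dfa_def by (simp add: card_image_le)
  also have "\<dots> \<le> 2 + card (nfa_states N) + Suc (card (nfa_states N)) * card (nfa_states N)"
    by (rule card_marker_states[OF fin])
  also have "\<dots> \<le> 2 + n + Suc n * n"
    using assms(2) by (intro add_mono mult_mono) auto
  also have "\<dots> \<le> 5 * n\<^sup>2"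
  proof -
    have "n \<le> n * n" "1 \<le> n * n" using \<open>1 \<le> n\<close> by simp_all
    moreover have "Suc n * n = n + n * n" by simp
    ultimately show ?thesis unfolding power2_eq_square by linarith
  qed
  finally show ?thesis .
qed

subsection \<open>Soundness: erasing the markers\<close>

lemma nfa_steps_append: "nfa_steps N S (u @ v) = nfa_steps N (nfa_steps N S u) v"
  by (induction u arbitrary: S) auto

lemma nfa_steps_mono: "S \<subseteq> T \<Longrightarrow> nfa_steps N S w \<subseteq> nfa_steps N T w"
proof (induction w arbitrary: S T)
  case (Cons a w)
  then show ?case by (simp add: UN_mono)
qed simp

lemma nfa_steps_UN: "nfa_steps N S w = (\<Union>q \<in> S. nfa_steps N {q} w)"
proof (induction w arbitrary: S)
  case (Cons a w)
  show ?case by (simp add: Cons.IH[of "\<Union>q \<in> S. nfa_delta N q a"] Cons.IH[of "nfa_delta N _ a"])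
qed simp

lemma marker_steps_append [simp]:
  "marker_steps N k s (u @ v) = marker_steps N k (marker_steps N k s u) v"
  by (induction u arbitrary: s) auto

lemma marker_steps_Dead [simp]: "marker_steps N k Dead w = Dead"
  by (induction w) (simp_all add: marker_step_def)

lemma marker_step_sound:
  assumes "s \<noteq> Dead" "marker_step N k s x \<noteq> Dead"
  shows "state_set N (current (marker_step N k s x)) \<subseteq> nfa_steps N (state_set N (current s)) (unmark [x])"
  using assms by (cases s) (auto simp: marker_step_def succs_def state_set_def split: if_splits)

lemma marker_steps_sound:
  assumes "s \<noteq> Dead" "marker_steps N k s u \<noteq> Dead"
  shows "state_set N (current (marker_steps N k s u)) \<subseteq> nfa_steps N (state_set N (current s)) (unmark u)"
  using assms
proof (induction u arbitrary: s)
  case (Cons x u)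
  then have live: "marker_step N k s x \<noteq> Dead" by (metis marker_steps.simps(2) marker_steps_Dead)
  have "state_set N (current (marker_steps N k s (x # u)))
      \<subseteq> nfa_steps N (state_set N (current (marker_step N k s x))) (unmark u)"
    using Cons.IH[OF live] Cons.prems(2) by simp
  also have "\<dots> \<subseteq> nfa_steps N (nfa_steps N (state_set N (current s)) (unmark [x])) (unmark u)"
    by (rule nfa_steps_mono[OF marker_step_sound[OF Cons.prems(1) live]])
  also have "\<dots> = nfa_steps N (state_set N (current s)) (unmark (x # u))"
    using nfa_steps_append[of N _ "unmark [x]" "unmark u"] unmark_simps(3)[of "[x]" u] by simp
  finally show ?case .
qed simp

lemma unmark_lists:
  "u \<in> lists S \<Longrightarrow> \<forall>x \<in> S. x mod 3 = 0 \<longrightarrow> x div 3 \<in> T \<Longrightarrow> unmark u \<in> lists T"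
  by (induction u) auto

lemma unmark_marker_dfa_lang:
  assumes "u \<in> dfa_lang (marker_dfa N k S)" "\<forall>x \<in> S. x mod 3 = 0 \<longrightarrow> x div 3 \<in> nfa_alph N"
  shows "unmark u \<in> nfa_lang N"
proof -
  let ?s = "marker_steps N k (Cur None) u"
  have u: "u \<in> lists S" and "?s \<in> marker_final N" using assms(1) by (auto simp: marker_dfa_lang_iff)
  then have "?s \<noteq> Dead" and final: "state_set N (current ?s) \<inter> nfa_final N \<noteq> {}"
    by (auto simp: marker_final_def)
  have "state_set N (current ?s) \<subseteq> nfa_steps N (nfa_init N) (unmark u)"
    using marker_steps_sound[OF _ \<open>?s \<noteq> Dead\<close>] by (simp add: state_set_def)
  then show ?thesis using final unmark_lists[OF u assms(2)] by (auto simp: nfa_lang_def)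
qed

subsection \<open>Completeness: inserting the markers of accepting runs\<close>

fun run :: "(nat, nat) nfa \<Rightarrow> nat option \<Rightarrow> nat list \<Rightarrow> nat list \<Rightarrow> bool" where
  "run N p [] rs \<longleftrightarrow> rs = []"
| "run N p (a # w) rs \<longleftrightarrow>
     (case rs of [] \<Rightarrow> False | r # rs' \<Rightarrow> r \<in> succs N p a \<and> run N (Some r) w rs')"

lemma run_length: "run N p w rs \<Longrightarrow> length rs = length w"
  by (induction w arbitrary: p rs) (auto split: list.splits)

lemma run_exists:
  "q \<in> nfa_steps N (state_set N p) w \<Longrightarrow> \<exists>rs. run N p w rs \<and> q \<in> state_set N (last (p # map Some rs))"
proof (induction w arbitrary: p)
  case (Cons a w)
  then obtain r where r: "r \<in> succs N p a" "q \<in> nfa_steps N (state_set N (Some r)) w"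
    using nfa_steps_UN[of N "succs N p a" w] by (auto simp: succs_def state_set_def)
  from Cons.IH[OF r(2)] obtain rs where "run N (Some r) w rs" "q \<in> state_set N (last (Some r # map Some rs))"
    by blast
  then show ?case using r(1) by (intro exI[of _ "r # rs"]) simp
qed simp

lemma run_states:
  assumes "run N p w rs" "nfa_wf N" "w \<in> lists (nfa_alph N)" "\<forall>q. p = Some q \<longrightarrow> q \<in> nfa_states N"
  shows "set rs \<subseteq> nfa_states N"
  using assms
proof (induction w arbitrary: p rs)
  case (Cons a w)
  then obtain r rs' where rs: "rs = r # rs'" "r \<in> succs N p a" "run N (Some r) w rs'"
    by (auto split: list.splits)
  then obtain q where q: "q \<in> state_set N p" "r \<in> nfa_delta N q a"
    by (auto simp: succs_def)
  have "state_set N p \<subseteq> nfa_states N"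
    using Cons.prems(2,4) by (auto simp: state_set_def nfa_wf_def split: option.splits)
  moreover have "a \<in> nfa_alph N" "w \<in> lists (nfa_alph N)" using Cons.prems(3) by auto
  ultimately have "r \<in> nfa_states N" using Cons.prems(2) q unfolding nfa_wf_def by blast
  moreover have "set rs' \<subseteq> nfa_states N"
    using Cons.IH[OF rs(3) Cons.prems(2) \<open>w \<in> lists (nfa_alph N)\<close>] \<open>r \<in> nfa_states N\<close> by simp
  ultimately show ?case by (simp add: rs(1))
qed simp

lemma accepting_run_or_junk:
  assumes "nfa_wf N" "w \<in> lists (nfa_alph N)"
  obtains rs where "length rs = length w" "set rs \<subseteq> nfa_states N"
    "w \<in> nfa_lang N \<Longrightarrow> run N None w rs \<and> state_set N (last (None # map Some rs)) \<inter> nfa_final N \<noteq> {}"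
proof (cases "w \<in> nfa_lang N")
  case True
  then obtain q where "q \<in> nfa_steps N (state_set N None) w" "q \<in> nfa_final N"
    by (auto simp: nfa_lang_def state_set_def)
  with run_exists obtain rs where "run N None w rs" "q \<in> state_set N (last (None # map Some rs))"
    by blast
  then show ?thesis using that run_states[OF _ assms] run_length \<open>q \<in> nfa_final N\<close> by blast
next
  case False
  obtain q where "q \<in> nfa_states N" using assms(1) unfolding nfa_wf_def by auto
  then show ?thesis using False by (intro that[of "replicate (length w) q"]) auto
qed

fun insert_blocks :: "nat list list \<Rightarrow> nat list \<Rightarrow> nat list" where
  "insert_blocks [] v = v"
| "insert_blocks (b # bs) [] = []"
| "insert_blocks (b # bs) (x # v) =
     (if x mod 3 = 0 then b @ x # insert_blocks bs v else x # insert_blocks (b # bs) v)"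

lemma subseq_insert_blocks: "subseq v (insert_blocks bs v)"
  by (induction bs v rule: insert_blocks.induct) (auto intro: subseq_drop_many)

lemma unmark_insert_blocks: "\<forall>b \<in> set bs. unmark b = [] \<Longrightarrow> unmark (insert_blocks bs v) = unmark v"
  by (induction bs v rule: insert_blocks.induct) auto

lemma insert_blocks_lists: "v \<in> lists S \<Longrightarrow> \<forall>b \<in> set bs. set b \<subseteq> S \<Longrightarrow> insert_blocks bs v \<in> lists S"
  by (induction bs v rule: insert_blocks.induct) auto

definition guesses :: "(nat, nat) nfa \<Rightarrow> nat \<Rightarrow> nat list \<Rightarrow> nat \<Rightarrow> bool" where
  "guesses N k b r \<longleftrightarrow> (\<forall>s. s \<noteq> Dead \<longrightarrow> marker_steps N k s b = Pend (current s) r)"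

lemma guesses_marker_pair:
  "guesses N 1 [3 * q + 1, 3 * q' + 2] q" "guesses N 2 [3 * q + 1, 3 * q' + 2] q'"
  unfolding guesses_def by (auto simp: marker_step_def split: marker_state.split)

lemma marker_steps_insert_blocks:
  assumes "s \<noteq> Dead" "list_all2 (guesses N k) bs rs" "run N (current s) (unmark v) rs"
  shows "marker_steps N k s (insert_blocks bs v) \<noteq> Dead
    \<and> current (marker_steps N k s (insert_blocks bs v)) = last (current s # map Some rs)"
  using assms
proof (induction v arbitrary: s bs rs)
  case (Cons x v)
  show ?case
  proof (cases "x mod 3 = 0")
    case True
    then obtain r rs' where rs: "rs = r # rs'" "r \<in> succs N (current s) (x div 3)"
        "run N (Some r) (unmark v) rs'"
      using Cons.prems(3) by (auto split: list.splits)
    then obtain b bs' where bs: "bs = b # bs'" "guesses N k b r" "list_all2 (guesses N k) bs' rs'"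
      using Cons.prems(2) by (auto simp: list_all2_Cons2)
    have "marker_steps N k s (insert_blocks bs (x # v)) = marker_steps N k (Cur (Some r)) (insert_blocks bs' v)"
      using bs Cons.prems(1) True rs(2) by (simp add: guesses_def marker_step_def)
    then show ?thesis using Cons.IH[of "Cur (Some r)" bs' rs'] bs(3) rs by simp
  next
    case False
    then have "marker_step N k s x \<noteq> Dead" "current (marker_step N k s x) = current s"
      using Cons.prems(1) by (cases s; simp add: marker_step_def)+
    moreover have "insert_blocks bs (x # v) = x # insert_blocks bs v"
      using False Cons.prems(2,3) by (cases bs) (auto simp: run_length dest: list_all2_lengthD)
    ultimately show ?thesis using Cons.IH[of "marker_step N k s x" bs rs] Cons.prems False by simp
  qed
qed simp

lemma insert_blocks_accepted:
  assumes "v \<in> lists S" "\<forall>b \<in> set bs. set b \<subseteq> S" "\<forall>x \<in> S. x mod 3 = k \<longrightarrow> x div 3 \<in> nfa_states N"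
    "list_all2 (guesses N k) bs rs" "run N None (unmark v) rs"
    "state_set N (last (None # map Some rs)) \<inter> nfa_final N \<noteq> {}"
  shows "insert_blocks bs v \<in> dfa_lang (marker_dfa N k S)"
proof -
  have l: "insert_blocks bs v \<in> lists S" by (rule insert_blocks_lists[OF assms(1,2)])
  have "marker_steps N k (Cur None) (insert_blocks bs v) \<in> marker_states N"
    by (rule marker_steps_closed[OF _ l assms(3)]) (simp add: marker_states_def)
  then show ?thesis
    using marker_steps_insert_blocks[of "Cur None" N k bs rs v] assms(4-6) l
    by (simp add: marker_dfa_lang_iff marker_final_def)
qed

lemma subseq_unmark_lift:
  "subseq (unmark u) w \<Longrightarrow> u \<in> lists S \<Longrightarrow> \<forall>a \<in> set w. 3 * a \<in> S \<Longrightarrow>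
    \<exists>v \<in> lists S. subseq u v \<and> unmark v = w"
proof (induction u arbitrary: w)
  case Nil
  then show ?case by (intro bexI[of _ "map (\<lambda>a. 3 * a) w"]) auto
next
  case (Cons x u)
  show ?case
  proof (cases "x mod 3 = 0")
    case False
    with Cons obtain v where "v \<in> lists S" "subseq u v" "unmark v = w" by auto
    with False Cons.prems(2) show ?thesis by (intro bexI[of _ "x # v"]) auto
  next
    case True
    with Cons.prems(1) obtain w1 w2 where w: "w = w1 @ x div 3 # w2" "subseq (unmark u) w2"
      by (auto dest: list_emb_ConsD)
    with Cons obtain v where v: "v \<in> lists S" "subseq u v" "unmark v = w2" by auto
    have "x = 3 * (x div 3)" using True by presburger
    then show ?thesis using w v True Cons.prems(2,3)
      by (intro bexI[of _ "map (\<lambda>a. 3 * a) w1 @ x # v"]) (auto intro: subseq_drop_many)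
  qed
qed

lemma marker_lift:
  assumes "nfa_wf A" "nfa_wf B" "nfa_alph A = nfa_alph B"
    and u: "u \<in> lists (marker_alph A B)" and w: "w \<in> nfa_lang A \<union> nfa_lang B" "subseq (unmark u) w"
  shows "\<exists>u' \<in> lists (marker_alph A B). subseq u u' \<and> unmark u' = w
    \<and> (w \<in> nfa_lang A \<longrightarrow> u' \<in> dfa_lang (marker_dfa A 1 (marker_alph A B)))
    \<and> (w \<in> nfa_lang B \<longrightarrow> u' \<in> dfa_lang (marker_dfa B 2 (marker_alph A B)))"
proof -
  let ?S = "marker_alph A B"
  have w_lists: "w \<in> lists (nfa_alph A)" using w(1) assms(3) by (auto simp: nfa_lang_def)
  then have "\<forall>a \<in> set w. 3 * a \<in> ?S" by (auto simp: marker_alph_def)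
  with subseq_unmark_lift[OF w(2) u] obtain v where v: "v \<in> lists ?S" "subseq u v" "unmark v = w"
    by blast
  obtain ra where ra: "length ra = length w" "set ra \<subseteq> nfa_states A"
      "w \<in> nfa_lang A \<Longrightarrow> run A None w ra \<and> state_set A (last (None # map Some ra)) \<inter> nfa_final A \<noteq> {}"
    using accepting_run_or_junk[OF assms(1) w_lists] by blast
  obtain rb where rb: "length rb = length w" "set rb \<subseteq> nfa_states B"
      "w \<in> nfa_lang B \<Longrightarrow> run B None w rb \<and> state_set B (last (None # map Some rb)) \<inter> nfa_final B \<noteq> {}"
    using accepting_run_or_junk[OF assms(2)] w_lists assms(3) by metis
  define bs where "bs = map2 (\<lambda>q q'. [3 * q + 1, 3 * q' + 2]) ra rb"
  have blocks: "\<exists>q \<in> nfa_states A. \<exists>q' \<in> nfa_states B. b = [3 * q + 1, 3 * q' + 2]"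
    if "b \<in> set bs" for b
    using that ra(2) rb(2) by (force simp: bs_def dest: set_zip_leftD set_zip_rightD)
  have bs_set: "\<forall>b \<in> set bs. set b \<subseteq> ?S \<and> unmark b = []"
    using blocks by (fastforce simp: marker_alph_def)
  have "list_all2 (guesses A 1) bs ra" "list_all2 (guesses B 2) bs rb"
    using ra(1) rb(1) guesses_marker_pair
    by (auto simp: bs_def list_all2_conv_all_nth)
  then have "w \<in> nfa_lang A \<longrightarrow> insert_blocks bs v \<in> dfa_lang (marker_dfa A 1 ?S)"
      "w \<in> nfa_lang B \<longrightarrow> insert_blocks bs v \<in> dfa_lang (marker_dfa B 2 ?S)"
    using insert_blocks_accepted[OF v(1)] bs_set ra(3) rb(3) v(3) marker_alph_decode(2,3) by blast+
  moreover have "subseq u (insert_blocks bs v)"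
    using v(2) subseq_insert_blocks by (rule subseq_order.order_trans)
  ultimately show ?thesis
    using insert_blocks_lists[OF v(1)] bs_set unmark_insert_blocks v(3) by blast
qed

lemma marker_tower_projection:
  assumes "nfa_wf A" "nfa_wf B" "nfa_alph A = nfa_alph B"
  shows "tower_projection unmark (lists (marker_alph A B)) (nfa_lang A) (nfa_lang B)
    (dfa_lang (marker_dfa A 1 (marker_alph A B))) (dfa_lang (marker_dfa B 2 (marker_alph A B)))"
proof
  show "unmark u \<in> nfa_lang A" if "u \<in> dfa_lang (marker_dfa A 1 (marker_alph A B))" for u
    using unmark_marker_dfa_lang[OF that marker_alph_decode(1)] .
  show "unmark u \<in> nfa_lang B" if "u \<in> dfa_lang (marker_dfa B 2 (marker_alph A B))" for u
    using unmark_marker_dfa_lang[OF that] marker_alph_decode(1)[of A B] assms(3) by simp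
next
  show "\<exists>u' \<in> lists (marker_alph A B). subseq u u' \<and> unmark u' = w
    \<and> (w \<in> nfa_lang A \<longrightarrow> u' \<in> dfa_lang (marker_dfa A 1 (marker_alph A B)))
    \<and> (w \<in> nfa_lang B \<longrightarrow> u' \<in> dfa_lang (marker_dfa B 2 (marker_alph A B)))"
    if "u \<in> lists (marker_alph A B)" "w \<in> nfa_lang A \<union> nfa_lang B" "subseq (unmark u) w" for u w
    using marker_lift[OF assms that] .
qed (simp_all add: subseq_unmark)

lemma marker_dfa_pair:
  assumes wf: "nfa_wf A" "nfa_wf B" and alph: "nfa_alph A = nfa_alph B"
    and card: "card (nfa_states A) \<le> n" "card (nfa_states B) \<le> n"
  defines "A' \<equiv> marker_dfa A 1 (marker_alph A B)" and "B' \<equiv> marker_dfa B 2 (marker_alph A B)"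
  shows "dfa_wf A'" "dfa_wf B'" "dfa_alph A' = dfa_alph B'"
    and "card (dfa_states A') \<le> 5 * n\<^sup>2" "card (dfa_states B') \<le> 5 * n\<^sup>2"
    and "card (dfa_alph A') \<le> 5 * (card (nfa_alph A) + n)"
    and "(\<exists>ws. is_tower (nfa_lang A) (nfa_lang B) ws \<and> length ws = r) \<longleftrightarrow>
      (\<exists>ws. is_tower (dfa_lang A') (dfa_lang B') ws \<and> length ws = r)"
    and "(\<exists>f. is_inf_tower (nfa_lang A) (nfa_lang B) f) \<longleftrightarrow> (\<exists>f. is_inf_tower (dfa_lang A') (dfa_lang B') f)"
proof -
  let ?S = "marker_alph A B"
  interpret tower_projection unmark "lists ?S" "nfa_lang A" "nfa_lang B" "dfa_lang A'" "dfa_lang B'"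
    unfolding A'_def B'_def by (rule marker_tower_projection[OF wf alph])
  have "finite ?S" using wf by (simp add: marker_alph_def nfa_wf_def)
  then show "dfa_wf A'" "dfa_wf B'"
    using marker_dfa_wf[OF wf(1) _ marker_alph_decode(2)] marker_dfa_wf[OF wf(2) _ marker_alph_decode(3)]
    by (simp_all add: A'_def B'_def)
  show "dfa_alph A' = dfa_alph B'" by (simp add: A'_def B'_def marker_dfa_def)
  show "card (dfa_states A') \<le> 5 * n\<^sup>2" "card (dfa_states B') \<le> 5 * n\<^sup>2"
    using card_marker_dfa_states[OF wf(1) card(1)] card_marker_dfa_states[OF wf(2) card(2)]
    by (simp_all add: A'_def B'_def)
  show "card (dfa_alph A') \<le> 5 * (card (nfa_alph A) + n)"
    using card_marker_alph[OF wf] card by (simp add: A'_def marker_dfa_def)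
  show "(\<exists>ws. is_tower (nfa_lang A) (nfa_lang B) ws \<and> length ws = r) \<longleftrightarrow>
      (\<exists>ws. is_tower (dfa_lang A') (dfa_lang B') ws \<and> length ws = r)"
    by (rule tower_of_height_iff)
  show "(\<exists>f. is_inf_tower (nfa_lang A) (nfa_lang B) f) \<longleftrightarrow> (\<exists>f. is_inf_tower (dfa_lang A') (dfa_lang B') f)"
    by (rule inf_tower_iff)
qed

theorem theorem12:
  shows "\<exists>C::nat. \<forall>(A::(nat, nat) nfa) (B::(nat, nat) nfa) (n::nat) (m::nat).
    nfa_wf A \<and> nfa_wf B \<and> nfa_alph A = nfa_alph B \<and> card (nfa_alph A) = m \<and>
    card (nfa_states A) \<le> n \<and> card (nfa_states B) \<le> n \<longrightarrow>
    (\<exists>(A'::(nat, nat) dfa) (B'::(nat, nat) dfa).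
       dfa_wf A' \<and> dfa_wf B' \<and> dfa_alph A' = dfa_alph B' \<and>
       card (dfa_states A') \<le> C * n^2 \<and> card (dfa_states B') \<le> C * n^2 \<and>
       card (dfa_alph A') \<le> C * (m + n) \<and>
       (\<forall>r \<ge> 1.
          (\<exists>ws. is_tower (nfa_lang A) (nfa_lang B) ws \<and> length ws = r) \<longleftrightarrow>
          (\<exists>ws. is_tower (dfa_lang A') (dfa_lang B') ws \<and> length ws = r)) \<and>
       ((\<exists>f. is_inf_tower (nfa_lang A) (nfa_lang B) f) \<longleftrightarrow>
        (\<exists>f. is_inf_tower (dfa_lang A') (dfa_lang B') f)))"
proof (intro exI[of _ 5] allI impI, elim conjE)
  fix A B :: "(nat, nat) nfa" and n m :: nat
  assume "nfa_wf A" "nfa_wf B" "nfa_alph A = nfa_alph B" "card (nfa_alph A) = m"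
    "card (nfa_states A) \<le> n" "card (nfa_states B) \<le> n"
  from marker_dfa_pair[OF this(1-3,5,6)] and \<open>card (nfa_alph A) = m\<close>
  show "\<exists>(A'::(nat, nat) dfa) (B'::(nat, nat) dfa).
       dfa_wf A' \<and> dfa_wf B' \<and> dfa_alph A' = dfa_alph B' \<and>
       card (dfa_states A') \<le> 5 * n^2 \<and> card (dfa_states B') \<le> 5 * n^2 \<and>
       card (dfa_alph A') \<le> 5 * (m + n) \<and>
       (\<forall>r \<ge> 1.
          (\<exists>ws. is_tower (nfa_lang A) (nfa_lang B) ws \<and> length ws = r) \<longleftrightarrow>
          (\<exists>ws. is_tower (dfa_lang A') (dfa_lang B') ws \<and> length ws = r)) \<and>
       ((\<exists>f. is_inf_tower (nfa_lang A) (nfa_lang B) f) \<longleftrightarrow>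
        (\<exists>f. is_inf_tower (dfa_lang A') (dfa_lang B') f))"
    by blast
qed

end
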